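(* Consider the evolution equation $\dot u=Au+Bu$ and methods (approximations $\Phi(h)$ of $e^{h(A+B)}$, with products read from left to right). (i) (Family I.) Let $\Phi^{[1]}(h)$ be a first-order method and define recursively, for $q=1,2,\dots$, $$\Phi^{[q+1]}(h)=\prod_{i=1}^{m_q}\Phi^{[q]}(\alpha_{q,i}h),$$ where for each $q$ the complex numbers $\alpha_{q,1},\dots,\alpha_{q,m_q}$ are all nonzero and satisfy $\sum_{i=1}^{m_q}\alpha_{q,i}=1$ and $\sum_{i=1}^{m_q}\alpha_{q,i}^{q+1}=0$ (so that $\Phi^{[q+1]}$ has order $q+1$). Then $\Phi^{[p+1]}(h)$ can be written as $$\Phi^{[p+1]}(h)=\prod_{i_p=1}^{m_p}\Big(\prod_{i_{p-1}=1}^{m_{p-1}}\Big(\cdots\Big(\prod_{i_1=1}^{m_1}\Phi^{[1]}(\alpha_{p,i_p}\alpha_{p-1,i_{p-1}}\cdots\alpha_{1,i_1}h)\Big)\cdots\Big)\Big),$$ and its coefficients are the products $\prod_{j=1}^p\alpha_{j,i_j}$, $1\le i_1\le m_1,\dots,1\le i_p\le m_p$. For every $p\geq 3$, every such method $\Phi^{[p+1]}(h)$ of order $p+1$ has at least one coefficient with negative real part. (ii) (Family II.) Let $\tilde\Phi^{[2]}(h)$ be a symmetric second-order method and define recursively, for $q=1,2,\dots$, the symmetric compositions $$\tilde\Phi^{[2q+2]}(h)=\prod_{i=1}^{m_q}\tilde\Phi^{[2q]}(\alpha_{q,i}h),$$ where for each $q$ the complex numbers $\alpha_{q,1},\dots,\alpha_{q,m_q}$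 are nonzero, satisfy $\alpha_{q,m_q+1-i}=\alpha_{q,i}$ for all $i$, $\sum_{i=1}^{m_q}\alpha_{q,i}=1$ and $\sum_{i=1}^{m_q}\alpha_{q,i}^{2q+1}=0$ (so that $\tilde\Phi^{[2q+2]}$ is symmetric of order $2q+2$). The coefficients of $\tilde\Phi^{[2p+2]}(h)$ are the products $\prod_{j=1}^p\alpha_{j,i_j}$, $1\le i_j\le m_j$, by which $h$ is multiplied in the corresponding expanded composition of $\tilde\Phi^{[2]}$. For every $p\geq 7$, every such method $\tilde\Phi^{[2p+2]}(h)$ of order $2p+2$ has at least one coefficient with negative real part.
   Context: A method $\Phi(h)$ is of order $p$ if $\Phi(h)-e^{h(A+B)}=\mathcal{O}(h^{p+1})$ as a formal expansion in $h$ for arbitrary non-commuting operators $A,B$. A method is symmetric if $\Phi(h)\Phi(-h)=\mathrm{Id}$. *)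

theory Defs
  imports Complex_Main
begin

definition composition_coeffs ::
  "nat \<Rightarrow> (nat \<Rightarrow> nat) \<Rightarrow> (nat \<Rightarrow> nat \<Rightarrow> complex) \<Rightarrow> complex set" where
  "composition_coeffs p m \<alpha> =
     {\<Prod>j\<in>{1..p}. \<alpha> j (i j) | i. \<forall>j\<in>{1..p}. 1 \<le> i j \<and> i j \<le> m j}"

definition familyI_coeffs ::
  "nat \<Rightarrow> (nat \<Rightarrow> nat) \<Rightarrow> (nat \<Rightarrow> nat \<Rightarrow> complex) \<Rightarrow> bool" where
  "familyI_coeffs p m \<alpha> \<longleftrightarrow>
     (\<forall>q\<in>{1..p}.
        (\<forall>i\<in>{1..m q}. \<alpha> q i \<noteq> 0) \<and>
        (\<Sum>i\<in>{1..m q}. \<alpha> q i) = 1 \<and>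
        (\<Sum>i\<in>{1..m q}. \<alpha> q i ^ (q + 1)) = 0)"

definition familyII_coeffs ::
  "nat \<Rightarrow> (nat \<Rightarrow> nat) \<Rightarrow> (nat \<Rightarrow> nat \<Rightarrow> complex) \<Rightarrow> bool" where
  "familyII_coeffs p m \<alpha> \<longleftrightarrow>
     (\<forall>q\<in>{1..p}.
        (\<forall>i\<in>{1..m q}. \<alpha> q i \<noteq> 0) \<and>
        (\<forall>i\<in>{1..m q}. \<alpha> q (m q + 1 - i) = \<alpha> q i) \<and>
        (\<Sum>i\<in>{1..m q}. \<alpha> q i) = 1 \<and>
        (\<Sum>i\<in>{1..m q}. \<alpha> q i ^ (2 * q + 1)) = 0)"

end

theory Submission
  imports Defs "HOL-Analysis.Complex_Transcendental" "HOL-Library.FuncSet"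
begin

text \<open>Suppose every coefficient has nonnegative real part. Since each level sums to 1,
  summing out levels shows that every partial product, in particular every single
  \<open>\<alpha> q i\<close>, lies in the closed right half-plane. Because \<open>\<Sum>i. \<alpha> q i ^ n q = 0\<close>, the
  arguments at level \<open>q\<close> spread over an arc of length at least \<open>pi / n q\<close>. Multiplying the
  level-wise factors of largest argument, the argument of the partial products grows by
  at most \<open>pi/2\<close> per level and never leaves the right half-plane, so the largest arguments
  sum to at most \<open>pi/2\<close>; likewise the smallest ones sum to at least \<open>-pi/2\<close>. Hence
  \<open>\<Sum>q. 1 / n q \<le> 1\<close>, which fails for \<open>n q = q + 1\<close>, \<open>p \<ge> 3\<close> and \<open>n q = 2q + 1\<close>, \<open>p \<ge> 7\<close>.\<close>

lemma prod_rcis: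
  "finite K \<Longrightarrow> (\<Prod>j\<in>K. rcis (r j) (t j)) = rcis (\<Prod>j\<in>K. r j) (\<Sum>j\<in>K. t j)"
  by (induction K rule: finite_induct) (auto simp: rcis_mult)

lemma Re_prod_eq_prod_cmod_cos_sum_Arg:
  "finite K \<Longrightarrow> Re (\<Prod>j\<in>K. z j) = (\<Prod>j\<in>K. cmod (z j)) * cos (\<Sum>j\<in>K. Arg (z j))"
proof -
  assume "finite K"
  then have "(\<Prod>j\<in>K. z j) = rcis (\<Prod>j\<in>K. cmod (z j)) (\<Sum>j\<in>K. Arg (z j))"
    by (simp add: prod_rcis[symmetric] rcis_cmod_Arg)
  then show ?thesis by simp
qed

text \<open>Each step adds at most \<open>pi/2\<close>, so the partial sums cannot jump over the arc
  \<open>(pi/2, pi]\<close> where the cosine is negative.\<close>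
lemma sum_le_pi_half_if_cos_partial_sums_nonneg:
  fixes \<theta> :: "nat \<Rightarrow> real"
  assumes "\<forall>q\<in>{1..p}. \<theta> q \<le> pi/2" and "\<forall>k\<le>p. 0 \<le> cos (\<Sum>q\<in>{1..k}. \<theta> q)"
  shows "(\<Sum>q\<in>{1..p}. \<theta> q) \<le> pi/2"
  using assms
proof (induction p)
  case 0
  then show ?case by simp
next
  case (Suc p)
  then have "(\<Sum>q\<in>{1..p}. \<theta> q) \<le> pi/2" and "\<theta> (Suc p) \<le> pi/2" by auto
  then have "(\<Sum>q\<in>{1..Suc p}. \<theta> q) < 3*pi/2" using pi_gt_zero by (simp; linarith)
  moreover have "0 \<le> cos (\<Sum>q\<in>{1..Suc p}. \<theta> q)" using Suc.prems(2) by blast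
  ultimately show ?case by (meson cos_lt_zero_pi not_le)
qed

lemma abs_sum_Arg_le_pi_half:
  fixes z :: "nat \<Rightarrow> complex"
  assumes z: "\<forall>q\<in>{1..p}. z q \<noteq> 0 \<and> 0 \<le> Re (z q)"
    and partial_prods: "\<forall>k\<le>p. 0 \<le> Re (\<Prod>q\<in>{1..k}. z q)"
  shows "\<bar>\<Sum>q\<in>{1..p}. Arg (z q)\<bar> \<le> pi/2"
proof -
  have Arg_bound: "\<bar>Arg (z q)\<bar> \<le> pi/2" if "q \<in> {1..p}" for q
    using z that Arg_Re_nonneg by blast
  have Arg_le: "Arg (z q) \<le> pi/2" and neg_Arg_le: "- Arg (z q) \<le> pi/2" if "q \<in> {1..p}" for q
    using Arg_bound[OF that] unfolding abs_le_iff by linarith+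
  have cos_nonneg: "0 \<le> cos (\<Sum>q\<in>{1..k}. Arg (z q))" if "k \<le> p" for k
  proof -
    have "0 < (\<Prod>q\<in>{1..k}. cmod (z q))" using z that by (intro prod_pos) auto
    moreover have "0 \<le> (\<Prod>q\<in>{1..k}. cmod (z q)) * cos (\<Sum>q\<in>{1..k}. Arg (z q))"
      using partial_prods that by (simp add: Re_prod_eq_prod_cmod_cos_sum_Arg)
    ultimately show ?thesis by (simp add: zero_le_mult_iff)
  qed
  have "(\<Sum>q\<in>{1..p}. Arg (z q)) \<le> pi/2"
    using Arg_le cos_nonneg by (intro sum_le_pi_half_if_cos_partial_sums_nonneg) auto
  moreover have "(\<Sum>q\<in>{1..p}. - Arg (z q)) \<le> pi/2"
    using neg_Arg_le cos_nonneg by (intro sum_le_pi_half_if_cos_partial_sums_nonneg) (auto simp: sum_negf)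
  ultimately show ?thesis by (simp add: sum_negf)
qed

text \<open>Rotating by the midpoint of the arc puts every \<open>z i ^ n\<close> into the open right
  half-plane when \<open>n * (hi - lo) < pi\<close>, so the powers could not sum to zero.\<close>
lemma Arg_spread_ge_if_sum_power_eq_0:
  fixes z :: "'a \<Rightarrow> complex"
  assumes "finite S" "S \<noteq> {}" and z: "\<forall>i\<in>S. z i \<noteq> 0 \<and> lo \<le> Arg (z i) \<and> Arg (z i) \<le> hi"
    and sum_pow: "(\<Sum>i\<in>S. z i ^ n) = 0" and "n > 0"
  shows "pi / n \<le> hi - lo"
proof (rule ccontr)
  assume "\<not> ?thesis"
  then have narrow: "real n * (hi - lo) < pi" using \<open>n > 0\<close> by (simp add: field_simps)
  define c where "c = (hi + lo) / 2"
  have rotated: "cis (- (n * c)) * z i ^ n = rcis (cmod (z i) ^ n) (n * (Arg (z i) - c))" for i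
  proof -
    have "z i ^ n = rcis (cmod (z i) ^ n) (n * Arg (z i))" by (metis DeMoivre2 rcis_cmod_Arg)
    then show ?thesis by (simp add: cis_rcis_eq rcis_mult algebra_simps)
  qed
  have "0 < Re (cis (- (n * c)) * z i ^ n)" if "i \<in> S" for i
  proof -
    have "lo \<le> Arg (z i)" "Arg (z i) \<le> hi" using z that by auto
    then have "\<bar>Arg (z i) - c\<bar> \<le> (hi - lo) / 2" unfolding c_def abs_le_iff by (auto simp: field_simps)
    then have "\<bar>n * (Arg (z i) - c)\<bar> \<le> n * ((hi - lo) / 2)"
      by (simp add: abs_mult mult_left_mono del: times_divide_eq_right)
    also have "\<dots> < pi / 2" using narrow by simp
    finally have "0 < cos (n * (Arg (z i) - c))" by (intro cos_gt_zero_pi) (auto simp: abs_less_iff)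
    moreover have "0 < cmod (z i) ^ n" using z that by simp
    ultimately show ?thesis unfolding rotated by simp
  qed
  then have "0 < Re (\<Sum>i\<in>S. cis (- (n * c)) * z i ^ n)"
    unfolding Re_sum using assms(1,2) by (intro sum_pos) auto
  moreover have "(\<Sum>i\<in>S. cis (- (n * c)) * z i ^ n) = 0"
    using sum_pow by (simp add: sum_distrib_left[symmetric])
  ultimately show False by simp
qed

lemma Re_prod_nonneg_marginal:
  fixes \<alpha> :: "'a \<Rightarrow> 'b \<Rightarrow> complex"
  assumes "finite K" "D \<subseteq> K"
    and sum_1: "\<forall>j\<in>K - D. (\<Sum>t\<in>A j. \<alpha> j t) = 1"
    and full: "\<forall>g. (\<forall>j\<in>K. g j \<in> A j) \<longrightarrow> 0 \<le> Re (\<Prod>j\<in>K. \<alpha> j (g j))"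
    and i: "\<forall>j\<in>D. i j \<in> A j"
  shows "0 \<le> Re (\<Prod>j\<in>D. \<alpha> j (i j))"
proof -
  define merge where "merge g j = (if j \<in> D then i j else g j)" for g j
  have "finite (A j)" if "j \<in> K - D" for j
  proof (rule ccontr)
    assume "infinite (A j)"
    moreover have "(\<Sum>t\<in>A j. \<alpha> j t) = 1" using sum_1 that by blast
    ultimately show False by simp
  qed
  then have expand: "(\<Prod>j\<in>K - D. \<Sum>t\<in>A j. \<alpha> j t) = (\<Sum>g\<in>PiE (K - D) A. \<Prod>j\<in>K - D. \<alpha> j (g j))"
    using assms(1) by (intro prod_sum_PiE) auto
  have split: "(\<Prod>j\<in>D. \<alpha> j (i j)) * (\<Prod>j\<in>K - D. \<alpha> j (g j)) = (\<Prod>j\<in>K. \<alpha> j (merge g j))" for g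
    using assms(1,2) prod.subset_diff[of D K "\<lambda>j. \<alpha> j (merge g j)"]
    by (simp add: merge_def mult.commute)
  have "(\<Prod>j\<in>D. \<alpha> j (i j)) = (\<Prod>j\<in>D. \<alpha> j (i j)) * (\<Prod>j\<in>K - D. \<Sum>t\<in>A j. \<alpha> j t)"
    using sum_1 by simp
  also have "\<dots> = (\<Sum>g\<in>PiE (K - D) A. \<Prod>j\<in>K. \<alpha> j (merge g j))"
    unfolding expand sum_distrib_left split ..
  finally have "Re (\<Prod>j\<in>D. \<alpha> j (i j)) = (\<Sum>g\<in>PiE (K - D) A. Re (\<Prod>j\<in>K. \<alpha> j (merge g j)))"
    by (simp add: Re_sum)
  moreover have "\<forall>j\<in>K. merge g j \<in> A j" if "g \<in> PiE (K - D) A" for g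
    using i that by (auto simp: merge_def)
  ultimately show ?thesis using full by (simp add: sum_nonneg)
qed

lemma finite_ex_max:
  fixes f :: "'a \<Rightarrow> 'b::linorder"
  assumes "finite S" "S \<noteq> {}"
  shows "\<exists>x\<in>S. \<forall>y\<in>S. f y \<le> f x"
proof -
  have "Max (f ` S) \<in> f ` S" using assms by simp
  then obtain x where "x \<in> S" "f x = Max (f ` S)" by (metis imageE)
  then show ?thesis using assms by (metis Max_ge finite_imageI image_eqI)
qed

lemma abs_sum_Arg_le_pi_half_if_composition_coeffs_Re_nonneg:
  fixes \<alpha> :: "nat \<Rightarrow> nat \<Rightarrow> complex"
  assumes nz: "\<forall>q\<in>{1..p}. \<forall>i\<in>{1..m q}. \<alpha> q i \<noteq> 0"
    and sum_1: "\<forall>q\<in>{1..p}. (\<Sum>i\<in>{1..m q}. \<alpha> q i) = 1"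
    and Re_nonneg: "\<forall>c\<in>composition_coeffs p m \<alpha>. 0 \<le> Re c"
    and i: "\<forall>q\<in>{1..p}. i q \<in> {1..m q}"
  shows "\<bar>\<Sum>q\<in>{1..p}. Arg (\<alpha> q (i q))\<bar> \<le> pi/2"
proof -
  have full: "\<forall>g. (\<forall>j\<in>{1..p}. g j \<in> {1..m j}) \<longrightarrow> 0 \<le> Re (\<Prod>j\<in>{1..p}. \<alpha> j (g j))"
    using Re_nonneg by (auto simp: composition_coeffs_def)
  have partial: "0 \<le> Re (\<Prod>j\<in>D. \<alpha> j (i j))" if "D \<subseteq> {1..p}" for D
    using sum_1 i that by (intro Re_prod_nonneg_marginal[OF _ _ _ full]) auto
  show ?thesis
  proof (rule abs_sum_Arg_le_pi_half)
    show "\<forall>q\<in>{1..p}. \<alpha> q (i q) \<noteq> 0 \<and> 0 \<le> Re (\<alpha> q (i q))"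
      using nz i partial[of "{_}"] by auto
    show "\<forall>k\<le>p. 0 \<le> Re (\<Prod>q\<in>{1..k}. \<alpha> q (i q))"
      by (auto intro!: partial)
  qed
qed

lemma composition_coeffs_ex_Re_neg:
  fixes \<alpha> :: "nat \<Rightarrow> nat \<Rightarrow> complex" and n :: "nat \<Rightarrow> nat"
  assumes nz: "\<forall>q\<in>{1..p}. \<forall>i\<in>{1..m q}. \<alpha> q i \<noteq> 0"
    and sum_1: "\<forall>q\<in>{1..p}. (\<Sum>i\<in>{1..m q}. \<alpha> q i) = 1"
    and sum_pow: "\<forall>q\<in>{1..p}. (\<Sum>i\<in>{1..m q}. \<alpha> q i ^ n q) = 0"
    and n_pos: "\<forall>q\<in>{1..p}. 0 < n q"
    and harmonic: "1 < (\<Sum>q\<in>{1..p}. 1 / real (n q))"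
  shows "\<exists>c\<in>composition_coeffs p m \<alpha>. Re c < 0"
proof (rule ccontr)
  assume "\<not> ?thesis"
  then have sum_Arg_bound: "\<bar>\<Sum>q\<in>{1..p}. Arg (\<alpha> q (i q))\<bar> \<le> pi/2"
    if "\<forall>q\<in>{1..p}. i q \<in> {1..m q}" for i
    using nz sum_1 that
    by (intro abs_sum_Arg_le_pi_half_if_composition_coeffs_Re_nonneg) (auto simp: not_less)
  have nonempty: "{1..m q} \<noteq> {}" if "q \<in> {1..p}" for q
    using sum_1 that by force
  have "\<forall>q\<in>{1..p}. \<exists>j\<in>{1..m q}. \<forall>i\<in>{1..m q}. Arg (\<alpha> q i) \<le> Arg (\<alpha> q j)"
    using nonempty by (intro ballI finite_ex_max) auto
  then obtain imax where imax:
    "\<forall>q\<in>{1..p}. imax q \<in> {1..m q} \<and> (\<forall>i\<in>{1..m q}. Arg (\<alpha> q i) \<le> Arg (\<alpha> q (imax q)))"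
    by metis
  have "\<forall>q\<in>{1..p}. \<exists>j\<in>{1..m q}. \<forall>i\<in>{1..m q}. - Arg (\<alpha> q i) \<le> - Arg (\<alpha> q j)"
    using nonempty by (intro ballI finite_ex_max) auto
  then obtain imin where imin:
    "\<forall>q\<in>{1..p}. imin q \<in> {1..m q} \<and> (\<forall>i\<in>{1..m q}. Arg (\<alpha> q (imin q)) \<le> Arg (\<alpha> q i))"
    by (metis neg_le_iff_le)
  have spread: "pi / n q \<le> Arg (\<alpha> q (imax q)) - Arg (\<alpha> q (imin q))" if "q \<in> {1..p}" for q
    using that imax imin nz sum_pow n_pos nonempty
    by (intro Arg_spread_ge_if_sum_power_eq_0[where S = "{1..m q}" and z = "\<alpha> q"]) auto
  have "pi < pi * (\<Sum>q\<in>{1..p}. 1 / real (n q))" using harmonic by simp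
  also have "\<dots> = (\<Sum>q\<in>{1..p}. pi / n q)" by (simp add: sum_distrib_left)
  also have "\<dots> \<le> (\<Sum>q\<in>{1..p}. Arg (\<alpha> q (imax q)) - Arg (\<alpha> q (imin q)))"
    using spread by (intro sum_mono) auto
  also have "\<dots> = (\<Sum>q\<in>{1..p}. Arg (\<alpha> q (imax q))) - (\<Sum>q\<in>{1..p}. Arg (\<alpha> q (imin q)))"
    by (simp add: sum_subtractf)
  also have "\<dots> \<le> pi"
    using sum_Arg_bound[of imax] sum_Arg_bound[of imin] imax imin unfolding abs_le_iff by auto
  finally show False by simp
qed

lemma harmonic_shifted_gt_1: "3 \<le> p \<Longrightarrow> 1 < (\<Sum>q\<in>{1..p}. 1 / real (q + 1))"
proof -
  assume "3 \<le> p"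
  then have "(\<Sum>q\<in>{1..3::nat}. 1 / real (q + 1)) \<le> (\<Sum>q\<in>{1..p}. 1 / real (q + 1))"
    by (intro sum_mono2) auto
  moreover have "(\<Sum>q\<in>{1..3::nat}. 1 / real (q + 1)) = 13/12" by (simp add: eval_nat_numeral)
  ultimately show ?thesis by simp
qed

lemma odd_harmonic_gt_1: "7 \<le> p \<Longrightarrow> 1 < (\<Sum>q\<in>{1..p}. 1 / real (2 * q + 1))"
proof -
  assume "7 \<le> p"
  then have "(\<Sum>q\<in>{1..7::nat}. 1 / real (2 * q + 1)) \<le> (\<Sum>q\<in>{1..p}. 1 / real (2 * q + 1))"
    by (intro sum_mono2) auto
  moreover have "1 < (\<Sum>q\<in>{1..7::nat}. 1 / real (2 * q + 1))" by (simp add: eval_nat_numeral)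
  ultimately show ?thesis by simp
qed

theorem theorem2p3:
  shows "(\<forall>p m \<alpha>. p \<ge> 3 \<longrightarrow> familyI_coeffs p m \<alpha> \<longrightarrow>
            (\<exists>c\<in>composition_coeffs p m \<alpha>. Re c < 0))
       \<and> (\<forall>p m \<alpha>. p \<ge> 7 \<longrightarrow> familyII_coeffs p m \<alpha> \<longrightarrow>
            (\<exists>c\<in>composition_coeffs p m \<alpha>. Re c < 0))"
proof (intro conjI allI impI)
  fix p m \<alpha> assume "p \<ge> 3" "familyI_coeffs p m \<alpha>"
  then show "\<exists>c\<in>composition_coeffs p m \<alpha>. Re c < 0"
    using harmonic_shifted_gt_1
    by (intro composition_coeffs_ex_Re_neg[where n = "\<lambda>q. q + 1"]) (auto simp: familyI_coeffs_def)
next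
  fix p m \<alpha> assume "p \<ge> 7" "familyII_coeffs p m \<alpha>"
  then show "\<exists>c\<in>composition_coeffs p m \<alpha>. Re c < 0"
    using odd_harmonic_gt_1
    by (intro composition_coeffs_ex_Re_neg[where n = "\<lambda>q. 2 * q + 1"]) (auto simp: familyII_coeffs_def)
qed

end
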